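(* Let $K$ be a fractal gasket generated by $\{\varphi_j(z)=r_j(z+d_j)\}_{j=1}^N$, let $r_*=\min_j r_j$, $r^*=\max_j r_j$, $s=\sqrt{\log r^*/\log r_*}$ and $\xi=(r_* )^s$. Then the map $[\mathbf x]\mapsto\pi(\mathbf x)$ from $(\mathcal A_{M_K},\tilde\rho_{M_K,\xi})$ to $K$ (with the Euclidean metric) is a bi-Hölder map with index $s$: it is a bijection and there is $C>0$ with $C^{-1}\tilde\rho_{M_K,\xi}(a,b)^{1/s}\le|\pi(a)-\pi(b)|\le C\,\tilde\rho_{M_K,\xi}(a,b)^s$ for all $a,b\in\mathcal A_{M_K}$.
   Context: Let $\Delta\subset\mathbb R^2$ be the triangle with vertices $\omega_\alpha=(0,0)$, $\omega_\beta=(1,0)$, $\omega_\gamma=(1/2,\sqrt3/2)$. A fractal gasket is the attractor $K$ (nonempty compact with $K=\bigcup_j\varphi_j(K)$) of $\{\varphi_j(z)=r_j(z+d_j)\}_{j=1}^N$, $r_j\in(0,1)$, $d_j\in\mathbb R^2$, such that $\bigcup_j\varphi_j(\Delta)\subset\Delta$ and for $i\ne j$, $\varphi_i(\Delta)\cap\varphi_j(\Delta)$ consists only of common vertices. Let $\Sigma=\{1,\dots,N\}$. Set $\alpha=-1$ if $(0,0)\notin K$, otherwise $\alpha$ is the index with $\varphi_\alpha((0,0))=(0,0)$; similarly $\beta=-2$ or $\varphi_\beta$ fixes $(1,0)$; $\gamma=-3$ or $\varphi_\gamma$ fixes $\omega_\gamma$. The coding map $\pi:\Sigma^\infty\to K$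 is $\{\pi(\mathbf x)\}=\bigcap_{i\ge1}\varphi_{x_1}\circ\cdots\circ\varphi_{x_i}(K)$. $\Sigma$-automaton, itinerary, surviving time: a $\Sigma$-automaton has states $Q_0\cup\{Id,Exit\}$, input alphabet $\Sigma^2$, initial state $Id$, transition $\delta$ with $\delta(Id,(i,j))=Id$ iff $i=j$; itinerary $S_0=Id$, $S_k=\delta(S_{k-1},(x_k,y_k))$ stopped at $Exit$; $T_M(\mathbf x,\mathbf y)$ = largest $k$ with $S_k\ne Exit$ (possibly $\infty$); $\rho_{M,\xi}=\xi^{T_M}$ ($\xi^\infty=0$). Triangle automaton: states $S_{uv}$ ($u\neq v\in\{\alpha,\beta,\gamma\}$) plus $Id,Exit$; $\delta(Id,(i,j))=S_{uv}\Rightarrow\delta(Id,(j,i))=S_{vu}$; $\delta(S_{uv},(i,j))=S_{uv}$ if $(i,j)=(v,u)$, else $Exit$. The topology automaton $M_K$ is the triangle automaton with, for $i\neq j$: $\delta(Id,(i,j))=S_{uv}$ if $u,v\in\Sigma$ and $\varphi_i(\omega_v)=\varphi_j(\omega_u)$, and $\delta(Id,(i,j))=Exit$ if $\varphi_i(K)\cap\varphi_j(K)=\emptyset$. With $\mathbf x\sim\mathbf y$ iff $\rho_{M_K,\xi}(\mathbf x,\mathbf y)=0$, $\mathcal A_{M_K}=\Sigma^\infty/\sim$ and $\tilde\rho_{M_K,\xi}([\mathbf x],[\mathbf y])=\inf\{\rho_{M_K,\xi}(\mathbf a,\mathbf b):\mathbf a\in[\mathbf x],\mathbf b\in[\mathbf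 y]\}$. *)

theory Defs
  imports "HOL-Analysis.Analysis" "HOL-Library.Extended_Nat"
begin

text \<open>Points of the plane are represented as complex numbers.
  Vertices of the triangle are labelled 0 (alpha), 1 (beta), 2 (gamma).\<close>

definition omega :: "nat \<Rightarrow> complex" where
  "omega v = (if v = 0 then 0 else if v = 1 then 1 else Complex (1/2) (sqrt 3 / 2))"

definition triangle :: "complex set" where
  "triangle = convex hull {omega 0, omega 1, omega 2}"

definition phi :: "(nat \<Rightarrow> real) \<Rightarrow> (nat \<Rightarrow> complex) \<Rightarrow> nat \<Rightarrow> complex \<Rightarrow> complex" where
  "phi r d j z = complex_of_real (r j) * (z + d j)"

definition fractal_gasket ::
  "nat \<Rightarrow> (nat \<Rightarrow> real) \<Rightarrow> (nat \<Rightarrow> complex) \<Rightarrow> complex set \<Rightarrow> bool" where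
  "fractal_gasket N r d K \<longleftrightarrow>
     (\<forall>j\<in>{1..N}. 0 < r j \<and> r j < 1) \<and>
     (\<forall>j\<in>{1..N}. phi r d j ` triangle \<subseteq> triangle) \<and>
     (\<forall>i\<in>{1..N}. \<forall>j\<in>{1..N}. i \<noteq> j \<longrightarrow>
        phi r d i ` triangle \<inter> phi r d j ` triangle
          \<subseteq> phi r d i ` {omega 0, omega 1, omega 2} \<inter> phi r d j ` {omega 0, omega 1, omega 2}) \<and>
     compact K \<and> K \<noteq> {} \<and> K = (\<Union>j\<in>{1..N}. phi r d j ` K)"

text \<open>Sigma^infinity: infinite words, 0-indexed (x 0 is the first letter x_1).\<close>
definition words :: "nat \<Rightarrow> (nat \<Rightarrow> nat) set" where
  "words N = {x. \<forall>k. x k \<in> {1..N}}"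

primrec cylmap :: "(nat \<Rightarrow> real) \<Rightarrow> (nat \<Rightarrow> complex) \<Rightarrow> (nat \<Rightarrow> nat) \<Rightarrow> nat \<Rightarrow> complex \<Rightarrow> complex" where
  "cylmap r d x 0 = id"
| "cylmap r d x (Suc n) = cylmap r d x n \<circ> phi r d (x n)"

definition coding :: "(nat \<Rightarrow> real) \<Rightarrow> (nat \<Rightarrow> complex) \<Rightarrow> complex set \<Rightarrow> (nat \<Rightarrow> nat) \<Rightarrow> complex" where
  "coding r d K x = (THE p. (\<Inter>i\<in>{1..}. cylmap r d x i ` K) = {p})"

text \<open>Letters alpha, beta, gamma (as integers): -(v+1) if omega v is not in K,
  otherwise the index j with phi_j(omega v) = omega v.\<close>
definition letter :: "nat \<Rightarrow> (nat \<Rightarrow> real) \<Rightarrow> (nat \<Rightarrow> complex) \<Rightarrow> complex set \<Rightarrow> nat \<Rightarrow> int" where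
  "letter N r d K v = (if omega v \<notin> K then - int (v + 1)
      else int (THE j. j \<in> {1..N} \<and> phi r d j (omega v) = omega v))"

datatype state = Id | S nat nat | Exit
  (* S a b stands for S_{uv} with u = letter of vertex a, v = letter of vertex b *)

definition delta :: "nat \<Rightarrow> (nat \<Rightarrow> real) \<Rightarrow> (nat \<Rightarrow> complex) \<Rightarrow> complex set
    \<Rightarrow> state \<Rightarrow> nat \<times> nat \<Rightarrow> state" where
  "delta N r d K q ij = (case ij of (i, j) \<Rightarrow>
     (case q of
        Id \<Rightarrow>
          (if i = j then Id
           else if (\<exists>a b. a \<in> {0,1,2} \<and> b \<in> {0,1,2} \<and> a \<noteq> b \<and>
                     letter N r d K a \<in> int ` {1..N} \<and> letter N r d K b \<in> int ` {1..N} \<and>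
                     phi r d i (omega b) = phi r d j (omega a))
           then (case (SOME (a, b). a \<in> {0,1,2} \<and> b \<in> {0,1,2} \<and> a \<noteq> b \<and>
                     letter N r d K a \<in> int ` {1..N} \<and> letter N r d K b \<in> int ` {1..N} \<and>
                     phi r d i (omega b) = phi r d j (omega a)) of (a, b) \<Rightarrow> S a b)
           else Exit)
      | S a b \<Rightarrow>
          (if int i = letter N r d K b \<and> int j = letter N r d K a then S a b else Exit)
      | Exit \<Rightarrow> Exit))"

primrec itin :: "nat \<Rightarrow> (nat \<Rightarrow> real) \<Rightarrow> (nat \<Rightarrow> complex) \<Rightarrow> complex set
    \<Rightarrow> (nat \<Rightarrow> nat) \<Rightarrow> (nat \<Rightarrow> nat) \<Rightarrow> nat \<Rightarrow> state" where
  "itin N r d K x y 0 = Id"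
| "itin N r d K x y (Suc k) =
     (if itin N r d K x y k = Exit then Exit else delta N r d K (itin N r d K x y k) (x k, y k))"

definition surv_time :: "nat \<Rightarrow> (nat \<Rightarrow> real) \<Rightarrow> (nat \<Rightarrow> complex) \<Rightarrow> complex set
    \<Rightarrow> (nat \<Rightarrow> nat) \<Rightarrow> (nat \<Rightarrow> nat) \<Rightarrow> enat" where
  "surv_time N r d K x y = Sup (enat ` {k. itin N r d K x y k \<noteq> Exit})"

definition rho :: "nat \<Rightarrow> (nat \<Rightarrow> real) \<Rightarrow> (nat \<Rightarrow> complex) \<Rightarrow> complex set \<Rightarrow> real
    \<Rightarrow> (nat \<Rightarrow> nat) \<Rightarrow> (nat \<Rightarrow> nat) \<Rightarrow> real" where
  "rho N r d K \<xi> x y = (case surv_time N r d K x y of enat n \<Rightarrow> \<xi> ^ n | \<infinity> \<Rightarrow> 0)"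

definition eqclass :: "nat \<Rightarrow> (nat \<Rightarrow> real) \<Rightarrow> (nat \<Rightarrow> complex) \<Rightarrow> complex set \<Rightarrow> real
    \<Rightarrow> (nat \<Rightarrow> nat) \<Rightarrow> (nat \<Rightarrow> nat) set" where
  "eqclass N r d K \<xi> x = {y \<in> words N. rho N r d K \<xi> x y = 0}"

definition quot :: "nat \<Rightarrow> (nat \<Rightarrow> real) \<Rightarrow> (nat \<Rightarrow> complex) \<Rightarrow> complex set \<Rightarrow> real
    \<Rightarrow> (nat \<Rightarrow> nat) set set" where
  "quot N r d K \<xi> = eqclass N r d K \<xi> ` words N"

definition rho_tilde :: "nat \<Rightarrow> (nat \<Rightarrow> real) \<Rightarrow> (nat \<Rightarrow> complex) \<Rightarrow> complex set \<Rightarrow> real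
    \<Rightarrow> (nat \<Rightarrow> nat) set \<Rightarrow> (nat \<Rightarrow> nat) set \<Rightarrow> real" where
  "rho_tilde N r d K \<xi> X Y = Inf {rho N r d K \<xi> a b | a b. a \<in> X \<and> b \<in> Y}"

end

theory Submission
  imports Defs
begin

text \<open>
  Along two codings x and y the topology automaton stays in Id while x and y agree, and in a
  state S a b while the level-n cylinders of x and y touch at a vertex fixed by all further
  letters of both words. As long as it survives, the two points lie in two touching cylinders of
  diameter at most rmax^n diam K. When it exits after step n, the two level-(n+1) cells are
  either disjoint, hence a fixed gap times rmin^n apart, or one of them leaves the shared
  vertex; then the barycentric coordinate of that vertex separates the two points by a fixed
  multiple of rmin^n. Since xi = rmin^s and rmax = rmin^(s^2), these bounds are powers s and
  1/s of rho = xi^n. In particular two codings give the same point iff the automaton never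
  exits, so the coding map descends to a bijection from the quotient onto K.
\<close>

lemma exists_pow_mult_less:
  fixes q D e :: real
  assumes "0 \<le> q" "q < 1" "0 \<le> D" "0 < e"
  shows "\<exists>n. q ^ n * D < e"
proof -
  obtain n where n: "q ^ n < e / (D + 1)"
    using real_arch_pow_inv[of "e / (D + 1)" q] assms by fastforce
  have "q ^ n * D \<le> q ^ n * (D + 1)"
    using assms by (intro mult_left_mono) auto
  also have "\<dots> < e"
    using n assms by (simp add: pos_less_divide_eq)
  finally show ?thesis ..
qed

lemma finite_pos_lower_bound:
  fixes g :: "'a \<Rightarrow> real"
  assumes "finite I" "\<And>i. i \<in> I \<Longrightarrow> 0 < g i"
  obtains e where "0 < e" "\<And>i. i \<in> I \<Longrightarrow> e \<le> g i"
proof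
  show "0 < Min (insert 1 (g ` I))"
    using assms by (subst Min_gr_iff) auto
  show "Min (insert 1 (g ` I)) \<le> g i" if "i \<in> I" for i
    using assms that by (intro Min_le) auto
qed

lemma powr_bounds_Inf:
  fixes S :: "real set"
  assumes "S \<noteq> {}" "0 < C" "0 < s"
    and bounds: "\<And>t. t \<in> S \<Longrightarrow> 0 \<le> t \<and> u \<le> C * t powr s \<and> (1 / C) * t powr (1 / s) \<le> u"
  shows "(1 / C) * Inf S powr (1 / s) \<le> u \<and> u \<le> C * Inf S powr s"
proof
  obtain t where t: "t \<in> S"
    using assms(1) by blast
  have bdd: "bdd_below S"
    using bounds by (intro bdd_belowI[of _ 0]) blast
  have Inf_nonneg: "0 \<le> Inf S"
    using assms(1) bounds by (intro cInf_greatest) auto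
  have "(1 / C) * Inf S powr (1 / s) \<le> (1 / C) * t powr (1 / s)"
    using assms(2,3) Inf_nonneg cInf_lower[OF t bdd] by (intro mult_left_mono powr_mono2) auto
  also have "\<dots> \<le> u"
    using bounds[OF t] by simp
  finally show "(1 / C) * Inf S powr (1 / s) \<le> u" .
  have "0 \<le> (1 / C) * t powr (1 / s)"
    using assms(2) by simp
  then have u: "0 \<le> u"
    using bounds[OF t] by linarith
  have "(u / C) powr (1 / s) \<le> Inf S"
  proof (rule cInf_greatest[OF assms(1)])
    fix t assume t: "t \<in> S"
    then have "u / C \<le> t powr s"
      using bounds[OF t] assms(2) by (simp add: field_simps)
    then have "(u / C) powr (1 / s) \<le> (t powr s) powr (1 / s)"
      using assms u by (intro powr_mono2) auto
    also have "\<dots> = t"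
      using assms(3) bounds[OF t] by (simp add: powr_powr)
    finally show "(u / C) powr (1 / s) \<le> t" .
  qed
  then have "((u / C) powr (1 / s)) powr s \<le> Inf S powr s"
    using assms(3) by (intro powr_mono2) auto
  then have "u / C \<le> Inf S powr s"
    using assms u by (simp add: powr_powr)
  then show "u \<le> C * Inf S powr s"
    using assms(2) by (simp add: field_simps)
qed

lemma exponent_of_ratio:
  fixes a b :: real
  assumes "0 < a" "a \<le> b" "b < 1"
  defines "s \<equiv> sqrt (ln b / ln a)"
  shows "0 < s" "a powr (s * s) = b"
proof -
  have ln: "ln a < 0" "ln b < 0"
    using assms by simp_all
  then have q: "0 < ln b / ln a"
    by (simp add: divide_neg_neg)
  then show "0 < s"
    unfolding s_def by simp
  have "s * s = ln b / ln a"
    unfolding s_def using ln by simp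
  then show "a powr (s * s) = b"
    using assms ln by (simp add: powr_def)
qed

lemma powr_pow_exponent:
  fixes a b s :: real
  assumes "0 < a" "0 < s" "a powr (s * s) = b"
  shows "((a powr s) ^ n) powr s = b ^ n" "((a powr s) ^ n) powr (1 / s) = a ^ n"
proof -
  have "0 < b"
    using assms(1,3) by auto
  have pow: "(a powr s) ^ n = a powr (s * real n)"
    using assms(1) by (simp add: powr_realpow[symmetric] powr_powr)
  have "((a powr s) ^ n) powr s = (a powr (s * s)) powr real n"
    unfolding pow powr_powr by (simp add: ac_simps)
  also have "\<dots> = b ^ n"
    using assms(3) \<open>0 < b\<close> by (simp add: powr_realpow)
  finally show "((a powr s) ^ n) powr s = b ^ n" .
  have "((a powr s) ^ n) powr (1 / s) = a powr real n"
    unfolding pow powr_powr using assms(2) by simp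
  then show "((a powr s) ^ n) powr (1 / s) = a ^ n"
    using assms(1) by (simp add: powr_realpow)
qed

section \<open>Quotient by the kernel of a map\<close>

lemma kernel_class_some:
  assumes E: "\<And>x. x \<in> W \<Longrightarrow> E x = {y \<in> W. g y = g x}" and x: "x \<in> W"
  shows "g (SOME y. y \<in> E x) = g x"
proof -
  have "x \<in> E x"
    using E[OF x] x by blast
  then have "(SOME y. y \<in> E x) \<in> E x"
    by (rule someI)
  then show ?thesis
    using E[OF x] by blast
qed

lemma bij_betw_kernel_quotient:
  assumes E: "\<And>x. x \<in> W \<Longrightarrow> E x = {y \<in> W. g y = g x}"
  shows "bij_betw (\<lambda>A. g (SOME x. x \<in> A)) (E ` W) (g ` W)"
  unfolding bij_betw_def
proof
  let ?f = "\<lambda>A. g (SOME x. x \<in> A)"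
  have f: "?f (E x) = g x" if "x \<in> W" for x
    using E that by (rule kernel_class_some)
  show "inj_on ?f (E ` W)"
  proof (rule inj_onI)
    fix A B
    assume "A \<in> E ` W" "B \<in> E ` W" "?f A = ?f B"
    then obtain x y where "x \<in> W" "y \<in> W" "A = E x" "B = E y" "g x = g y"
      using f by (metis imageE)
    then show "A = B"
      using E by presburger
  qed
  have "?f ` E ` W = (\<lambda>x. ?f (E x)) ` W"
    by (simp add: image_image)
  also have "\<dots> = g ` W"
    using f by (rule image_cong[OF refl])
  finally show "?f ` E ` W = g ` W" .
qed

section \<open>Barycentric coordinates\<close>

definition barycentric :: "nat \<Rightarrow> complex \<Rightarrow> real" where
  "barycentric v z =
     (if v = 0 then 1 - Re z - Im z / sqrt 3
      else if v = 1 then Re z - Im z / sqrt 3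
      else 2 * Im z / sqrt 3)"

definition barycentric_lin :: "nat \<Rightarrow> complex \<Rightarrow> real" where
  "barycentric_lin v z = barycentric v z - barycentric v 0"

lemma less_3_cases: "v < (3::nat) \<Longrightarrow> v = 0 \<or> v = 1 \<or> v = 2"
  by auto

lemma barycentric_lin_diff: "barycentric_lin v (a - b) = barycentric v a - barycentric v b"
  by (auto simp: barycentric_lin_def barycentric_def field_simps)

lemma barycentric_lin_add: "barycentric_lin v (a + b) = barycentric_lin v a + barycentric_lin v b"
  by (auto simp: barycentric_lin_def barycentric_def field_simps)

lemma barycentric_lin_scale: "barycentric_lin v (of_real t * a) = t * barycentric_lin v a"
  by (auto simp: barycentric_lin_def barycentric_def field_simps)

lemma abs_barycentric_lin_le: "\<bar>barycentric_lin v w\<bar> \<le> 2 * cmod w"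
proof -
  have "\<bar>Im w / sqrt 3\<bar> \<le> \<bar>Im w\<bar>"
    by (simp add: abs_div divide_le_eq mult_le_cancel_left1)
  moreover have "\<bar>Re w - Im w / sqrt 3\<bar> \<le> \<bar>Re w\<bar> + \<bar>Im w / sqrt 3\<bar>"
    by (rule abs_triangle_ineq4)
  moreover have "\<bar>- Re w - Im w / sqrt 3\<bar> \<le> \<bar>Re w\<bar> + \<bar>Im w / sqrt 3\<bar>"
    using abs_triangle_ineq4[of "- Re w" "Im w / sqrt 3"] by simp
  ultimately show ?thesis
    using abs_Re_le_cmod[of w] abs_Im_le_cmod[of w]
    by (auto simp: barycentric_lin_def barycentric_def abs_mult)
qed

lemma barycentric_omega:
  "u < 3 \<Longrightarrow> v < 3 \<Longrightarrow> barycentric v (omega u) = (if u = v then 1 else 0)"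
  by (cases "u = 0"; cases "u = 1"; cases "v = 0"; cases "v = 1")
    (auto simp: barycentric_def omega_def)

lemma barycentric_sum: "barycentric 0 z + barycentric 1 z + barycentric 2 z = 1"
  by (auto simp: barycentric_def field_simps)

lemma barycentric_decomp:
  "z = of_real (barycentric 0 z) * omega 0 + of_real (barycentric 1 z) * omega 1
     + of_real (barycentric 2 z) * omega 2"
  by (auto simp: barycentric_def omega_def complex_eq_iff field_simps)

lemma triangle_iff_barycentric:
  "z \<in> triangle \<longleftrightarrow> 0 \<le> barycentric 0 z \<and> 0 \<le> barycentric 1 z \<and> 0 \<le> barycentric 2 z"
proof
  assume "z \<in> triangle"
  then obtain a b c where abc: "0 \<le> a" "0 \<le> b" "0 \<le> c" "a + b + c = 1"
    "z = a *\<^sub>R omega 0 + b *\<^sub>R omega 1 + c *\<^sub>R omega 2"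
    unfolding triangle_def convex_hull_3 by blast
  then have "barycentric 0 z = a" "barycentric 1 z = b" "barycentric 2 z = c"
    by (auto simp: barycentric_def omega_def scaleR_conv_of_real field_simps)
  with abc show "0 \<le> barycentric 0 z \<and> 0 \<le> barycentric 1 z \<and> 0 \<le> barycentric 2 z"
    by simp
next
  assume "0 \<le> barycentric 0 z \<and> 0 \<le> barycentric 1 z \<and> 0 \<le> barycentric 2 z"
  moreover have "z = barycentric 0 z *\<^sub>R omega 0 + barycentric 1 z *\<^sub>R omega 1
      + barycentric 2 z *\<^sub>R omega 2"
    using barycentric_decomp[of z] by (simp add: scaleR_conv_of_real)
  ultimately show "z \<in> triangle"
    unfolding triangle_def convex_hull_3 using barycentric_sum[of z] by blast
qed

lemma barycentric_nonneg: "z \<in> triangle \<Longrightarrow> v < 3 \<Longrightarrow> 0 \<le> barycentric v z"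
  using triangle_iff_barycentric less_3_cases by blast

lemma barycentric_le_1: "z \<in> triangle \<Longrightarrow> v < 3 \<Longrightarrow> barycentric v z \<le> 1"
  using triangle_iff_barycentric[of z] barycentric_sum[of z] less_3_cases[of v] by auto

lemma barycentric_eq_1_imp_vertex:
  assumes "z \<in> triangle" "v < 3" "barycentric v z = 1"
  shows "z = omega v"
proof -
  have eq: "barycentric u z = barycentric u (omega v)" if "u < 3" for u
    using assms that triangle_iff_barycentric[of z] barycentric_sum[of z]
      barycentric_omega[of v u] less_3_cases[of u] less_3_cases[of v]
    by auto
  have "z = of_real (barycentric 0 z) * omega 0 + of_real (barycentric 1 z) * omega 1
      + of_real (barycentric 2 z) * omega 2"
    by (rule barycentric_decomp)
  also have "\<dots> = of_real (barycentric 0 (omega v)) * omega 0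
      + of_real (barycentric 1 (omega v)) * omega 1 + of_real (barycentric 2 (omega v)) * omega 2"
    using eq[of 0] eq[of 1] eq[of 2] by simp
  also have "\<dots> = omega v"
    by (rule barycentric_decomp[symmetric])
  finally show ?thesis .
qed

lemma omega_in_triangle: "v < 3 \<Longrightarrow> omega v \<in> triangle"
  unfolding triangle_iff_barycentric using barycentric_omega[of v] by auto

lemma convex_triangle: "convex triangle"
  unfolding triangle_def by simp

lemma compact_triangle: "compact triangle"
  unfolding triangle_def by (simp add: compact_convex_hull)

lemma norm_omega_diff: "u < 3 \<Longrightarrow> v < 3 \<Longrightarrow> cmod (omega u - omega v) = (if u = v then 0 else 1)"
  by (cases "u = 0"; cases "u = 1"; cases "v = 0"; cases "v = 1")
    (auto simp: omega_def cmod_def power2_eq_square)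

lemma norm_sub_vertex_le:
  assumes "z \<in> triangle" "v < 3"
  shows "cmod (z - omega v) \<le> 1 - barycentric v z"
proof -
  define b where "b u = barycentric u z" for u
  let ?e = "\<lambda>u. omega u - omega v"
  have z: "z = of_real (b 0) * omega 0 + of_real (b 1) * omega 1 + of_real (b 2) * omega 2"
    unfolding b_def by (rule barycentric_decomp)
  have sum: "b 0 + b 1 + b 2 = 1"
    unfolding b_def by (rule barycentric_sum)
  have "of_real (b 0) * ?e 0 + of_real (b 1) * ?e 1 + of_real (b 2) * ?e 2
      = z - of_real (b 0 + b 1 + b 2) * omega v"
    unfolding z by (simp add: algebra_simps)
  then have "z - omega v = of_real (b 0) * ?e 0 + of_real (b 1) * ?e 1 + of_real (b 2) * ?e 2"
    using sum by (metis of_real_1 mult_1)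
  also have "cmod \<dots> \<le> cmod (of_real (b 0) * ?e 0) + cmod (of_real (b 1) * ?e 1)
      + cmod (of_real (b 2) * ?e 2)"
    using norm_triangle_ineq[of "of_real (b 0) * ?e 0 + of_real (b 1) * ?e 1" "of_real (b 2) * ?e 2"]
      norm_triangle_ineq[of "of_real (b 0) * ?e 0" "of_real (b 1) * ?e 1"] by linarith
  also have "\<dots> = b 0 * cmod (?e 0) + b 1 * cmod (?e 1) + b 2 * cmod (?e 2)"
    using barycentric_nonneg[OF assms(1)] by (simp add: norm_mult b_def)
  also have "\<dots> = 1 - b v"
    using assms(2) sum less_3_cases[of v] by (auto simp: norm_omega_diff)
  finally show ?thesis
    unfolding b_def .
qed

text \<open>The copies s1 (triangle - omega b) and s2 (triangle - omega a) touch at 0, and the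
  linear part of barycentric b is nonpositive on the first and nonnegative on the second.\<close>

lemma glued_triangles_separation:
  assumes "a < 3" "b < 3" "a \<noteq> b" "q1 \<in> triangle" "q2 \<in> triangle" "0 \<le> s1" "0 \<le> s2"
  shows "s1 * (1 - barycentric b q1)
    \<le> 2 * cmod (of_real s1 * (q1 - omega b) - of_real s2 * (q2 - omega a))"
proof -
  let ?w = "of_real s2 * (q2 - omega a) - of_real s1 * (q1 - omega b)"
  have "barycentric_lin b ?w = s2 * barycentric b q2 + s1 * (1 - barycentric b q1)"
    unfolding diff_conv_add_uminus[of "of_real s2 * _"] barycentric_lin_add
    using assms barycentric_omega[of a b] barycentric_omega[of b b]
    by (simp add: barycentric_lin_scale barycentric_lin_diff flip: mult_minus_right of_real_minus)
  then have "s1 * (1 - barycentric b q1) \<le> barycentric_lin b ?w"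
    using assms barycentric_nonneg[of q2 b] by simp
  also have "\<dots> \<le> 2 * cmod ?w"
    using abs_barycentric_lin_le[of b ?w] by simp
  finally show ?thesis
    by (simp add: norm_minus_commute)
qed

lemma glued_triangles_separation_scaled:
  assumes "a < 3" "b < 3" "a \<noteq> b" "q1 \<in> triangle" "q2 \<in> triangle"
    and "0 \<le> h" "h \<le> s1" "0 \<le> s2" "0 \<le> \<eta>" "\<eta> \<le> 1 - barycentric b q1"
  shows "\<eta> / 2 * h \<le> cmod (of_real s1 * (q1 - omega b) - of_real s2 * (q2 - omega a))"
proof -
  have "h * \<eta> \<le> s1 * (1 - barycentric b q1)"
    using assms by (intro mult_mono) auto
  also have "\<dots> \<le> 2 * cmod (of_real s1 * (q1 - omega b) - of_real s2 * (q2 - omega a))"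
    using assms by (intro glued_triangles_separation) auto
  finally show ?thesis
    by (simp add: mult.commute)
qed

lemma phi_diff: "phi r d j z - phi r d j w = of_real (r j) * (z - w)"
  by (simp add: phi_def algebra_simps)

definition cyl_ratio :: "(nat \<Rightarrow> real) \<Rightarrow> (nat \<Rightarrow> nat) \<Rightarrow> nat \<Rightarrow> real" where
  "cyl_ratio r x n = (\<Prod>l<n. r (x l))"

lemma cylmap_affine: "\<exists>t. \<forall>z. cylmap r d x n z = of_real (cyl_ratio r x n) * z + t"
proof (induction n)
  case 0
  then show ?case
    by (auto simp: cyl_ratio_def)
next
  case (Suc n)
  then obtain t where t: "\<forall>z. cylmap r d x n z = of_real (cyl_ratio r x n) * z + t"
    by blast
  show ?case
    by (rule exI[of _ "of_real (cyl_ratio r x n) * (of_real (r (x n)) * d (x n)) + t"])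
      (simp add: t phi_def cyl_ratio_def algebra_simps)
qed

lemma cylmap_diff:
  "cylmap r d x n z - cylmap r d x n w = of_real (cyl_ratio r x n) * (z - w)"
  using cylmap_affine[of r d x n] by (auto simp: algebra_simps)

lemma continuous_on_cylmap: "continuous_on A (cylmap r d x n)"
proof -
  obtain t where "\<forall>z. cylmap r d x n z = of_real (cyl_ratio r x n) * z + t"
    using cylmap_affine by blast
  then have "cylmap r d x n = (\<lambda>z. of_real (cyl_ratio r x n) * z + t)"
    by auto
  then show ?thesis
    by (simp add: continuous_intros)
qed

lemma cylmap_cong: "(\<And>l. l < n \<Longrightarrow> x l = y l) \<Longrightarrow> cylmap r d x n = cylmap r d y n"
  by (induction n) auto

lemma cylmap_Suc_image: "cylmap r d x (Suc n) ` A = cylmap r d x n ` phi r d (x n) ` A"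
  by (simp add: image_comp)

lemma itin_Exit_mono:
  assumes "itin N r d K x y k = Exit" "k \<le> m"
  shows "itin N r d K x y m = Exit"
  using assms(2) by (induction m rule: dec_induct) (use assms(1) in auto)

lemma surv_time_infinite:
  assumes "\<And>k. itin N r d K x y k \<noteq> Exit"
  shows "surv_time N r d K x y = \<infinity>"
proof -
  have "infinite (range enat)"
    by (meson enat.inject finite_imageD infinite_UNIV_nat inj_onI)
  with assms show ?thesis
    by (simp add: surv_time_def Sup_enat_def)
qed

lemma surv_time_exit:
  assumes "itin N r d K x y n \<noteq> Exit" "itin N r d K x y (Suc n) = Exit"
  shows "surv_time N r d K x y = enat n"
proof -
  have "itin N r d K x y k \<noteq> Exit \<longleftrightarrow> k \<le> n" for k
  proof
    assume alive: "itin N r d K x y k \<noteq> Exit"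
    show "k \<le> n"
    proof (rule ccontr)
      assume "\<not> k \<le> n"
      then have "Suc n \<le> k"
        by simp
      then show False
        using itin_Exit_mono[OF assms(2)] alive by blast
    qed
  next
    assume "k \<le> n"
    then show "itin N r d K x y k \<noteq> Exit"
      using itin_Exit_mono[of N r d K x y k n] assms(1) by blast
  qed
  then have "{k. itin N r d K x y k \<noteq> Exit} = {..n}"
    by auto
  moreover have "Max (enat ` {..n}) = enat n"
    by (rule Max_eqI) auto
  ultimately show ?thesis
    by (simp add: surv_time_def Sup_enat_def)
qed

lemma itin_last_alive:
  "itin N r d K x y k = Exit \<Longrightarrow>
    \<exists>n. itin N r d K x y n \<noteq> Exit \<and> itin N r d K x y (Suc n) = Exit"
proof (induction k)
  case (Suc m)
  then show ?case
    by (cases "itin N r d K x y m = Exit") (auto simp del: itin.simps)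
qed simp

lemma rho_nonneg: "0 < \<xi> \<Longrightarrow> 0 \<le> rho N r d K \<xi> x y"
  by (auto simp: rho_def split: enat.splits)

lemma rho_eq_0_iff:
  assumes "0 < \<xi>"
  shows "rho N r d K \<xi> x y = 0 \<longleftrightarrow> (\<forall>k. itin N r d K x y k \<noteq> Exit)"
proof (cases "\<forall>k. itin N r d K x y k \<noteq> Exit")
  case True
  then have "surv_time N r d K x y = \<infinity>"
    by (intro surv_time_infinite) blast
  with True show ?thesis
    by (simp add: rho_def)
next
  case False
  then obtain n where "itin N r d K x y n \<noteq> Exit" "itin N r d K x y (Suc n) = Exit"
    using itin_last_alive by blast
  then have "surv_time N r d K x y = enat n"
    by (rule surv_time_exit)
  with False assms show ?thesis
    by (simp add: rho_def)
qed

section \<open>Fractal gaskets\<close>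

locale gasket_ifs =
  fixes N :: nat and r :: "nat \<Rightarrow> real" and d :: "nat \<Rightarrow> complex" and K :: "complex set"
  assumes gasket: "fractal_gasket N r d K"
begin

abbreviation "\<phi> \<equiv> phi r d"
abbreviation "rmin \<equiv> Min (r ` {1..N})"
abbreviation "rmax \<equiv> Max (r ` {1..N})"
abbreviation "code \<equiv> coding r d K"

lemma r_pos: "j \<in> {1..N} \<Longrightarrow> 0 < r j"
  and r_less_1: "j \<in> {1..N} \<Longrightarrow> r j < 1"
  and phi_triangle_subset: "j \<in> {1..N} \<Longrightarrow> \<phi> j ` triangle \<subseteq> triangle"
  and phi_triangle_inter: "i \<in> {1..N} \<Longrightarrow> j \<in> {1..N} \<Longrightarrow> i \<noteq> j \<Longrightarrow>
    \<phi> i ` triangle \<inter> \<phi> j ` triangle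
      \<subseteq> \<phi> i ` {omega 0, omega 1, omega 2} \<inter> \<phi> j ` {omega 0, omega 1, omega 2}"
  and compact_K: "compact K"
  and K_nonempty: "K \<noteq> {}"
  and K_self_similar: "K = (\<Union>j\<in>{1..N}. \<phi> j ` K)"
proof -
  note g = gasket[unfolded fractal_gasket_def]
  show "j \<in> {1..N} \<Longrightarrow> 0 < r j" "j \<in> {1..N} \<Longrightarrow> r j < 1"
    "j \<in> {1..N} \<Longrightarrow> \<phi> j ` triangle \<subseteq> triangle" "compact K" "K \<noteq> {}"
    "K = (\<Union>j\<in>{1..N}. \<phi> j ` K)"
    using g by simp_all
  show "i \<in> {1..N} \<Longrightarrow> j \<in> {1..N} \<Longrightarrow> i \<noteq> j \<Longrightarrow>
    \<phi> i ` triangle \<inter> \<phi> j ` triangle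
      \<subseteq> \<phi> i ` {omega 0, omega 1, omega 2} \<inter> \<phi> j ` {omega 0, omega 1, omega 2}"
    using g by (simp only: Ball_def) blast
qed

lemma N_pos: "1 \<le> N"
  using K_nonempty K_self_similar by (cases N) auto

lemma phi_K_subset: "j \<in> {1..N} \<Longrightarrow> \<phi> j ` K \<subseteq> K"
  using K_self_similar by blast

lemma phi_inj: "j \<in> {1..N} \<Longrightarrow> \<phi> j z = \<phi> j w \<Longrightarrow> z = w"
  using phi_diff[of r d j z w] r_pos[of j] by auto

lemma rmin_pos: "0 < rmin"
  and rmax_less_1: "rmax < 1"
  and rmin_le_r: "j \<in> {1..N} \<Longrightarrow> rmin \<le> r j"
  and r_le_rmax: "j \<in> {1..N} \<Longrightarrow> r j \<le> rmax"
  and rmin_le_rmax: "rmin \<le> rmax"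
proof -
  have ne: "r ` {1..N} \<noteq> {}" and fin: "finite (r ` {1..N})"
    using N_pos by auto
  show "0 < rmin"
    using ne fin r_pos by (simp add: Min_gr_iff)
  show "rmax < 1"
    using ne fin r_less_1 by (simp add: Max_less_iff)
  show bounds: "rmin \<le> r j" "r j \<le> rmax" if "j \<in> {1..N}" for j
    using fin that by auto
  have "1 \<in> {1..N}"
    using N_pos by simp
  then show "rmin \<le> rmax"
    using bounds by (blast intro: order_trans)
qed

lemma words_in_range: "x \<in> words N \<Longrightarrow> x k \<in> {1..N}"
  by (auto simp: words_def)

lemma cyl_ratio_bounds:
  assumes "x \<in> words N"
  shows "rmin ^ n \<le> cyl_ratio r x n" "cyl_ratio r x n \<le> rmax ^ n" "0 < cyl_ratio r x n"
proof -
  have x: "x l \<in> {1..N}" for l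
    using assms by (rule words_in_range)
  have "(\<Prod>l<n. rmin) \<le> (\<Prod>l<n. r (x l))"
    using rmin_pos rmin_le_r[OF x] by (intro prod_mono) auto
  then show "rmin ^ n \<le> cyl_ratio r x n"
    by (simp add: cyl_ratio_def)
  have "(\<Prod>l<n. r (x l)) \<le> (\<Prod>l<n. rmax)"
    using r_pos[OF x] r_le_rmax[OF x] by (intro prod_mono) (auto simp: less_imp_le)
  then show "cyl_ratio r x n \<le> rmax ^ n"
    by (simp add: cyl_ratio_def)
  show "0 < cyl_ratio r x n"
    unfolding cyl_ratio_def using r_pos[OF x] by (intro prod_pos) auto
qed

lemma cylmap_K_antimono:
  assumes "x \<in> words N" "m \<le> n"
  shows "cylmap r d x n ` K \<subseteq> cylmap r d x m ` K"
  using assms(2)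
proof (induction n rule: dec_induct)
  case (step n)
  have "cylmap r d x (Suc n) ` K \<subseteq> cylmap r d x n ` K"
    unfolding cylmap_Suc_image using phi_K_subset[OF words_in_range[OF assms(1)]] by blast
  with step.IH show ?case
    by blast
qed simp

lemma cylmap_triangle_subset: "x \<in> words N \<Longrightarrow> cylmap r d x n ` triangle \<subseteq> triangle"
proof (induction n)
  case (Suc n)
  then show ?case
    unfolding cylmap_Suc_image using phi_triangle_subset[OF words_in_range[OF Suc.prems]] by blast
qed simp

lemma bounded_K: "bounded K"
  using compact_K by (rule compact_imp_bounded)

lemma diameter_K_nonneg: "0 \<le> diameter K"
  using bounded_K by (rule diameter_ge_0)

lemma dist_cylmap_le:
  assumes "x \<in> words N" "p \<in> K" "q \<in> K"
  shows "cmod (cylmap r d x n p - cylmap r d x n q) \<le> rmax ^ n * diameter K"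
proof -
  have "cmod (cylmap r d x n p - cylmap r d x n q) = cyl_ratio r x n * cmod (p - q)"
    using cyl_ratio_bounds(3)[OF assms(1), of n] by (simp add: cylmap_diff norm_mult)
  also have "\<dots> \<le> rmax ^ n * diameter K"
    using cyl_ratio_bounds[OF assms(1), of n] diameter_bounded_bound[OF bounded_K assms(2,3)]
    by (intro mult_mono) (auto simp: dist_norm)
  finally show ?thesis .
qed

lemma rmax_pow_diameter_small:
  assumes "0 < e"
  shows "\<exists>n. rmax ^ n * diameter K < e"
proof -
  have "0 \<le> rmax"
    using rmin_pos rmin_le_rmax by linarith
  then show ?thesis
    using exists_pow_mult_less rmax_less_1 diameter_K_nonneg assms by blast
qed

lemma coding_singleton:
  assumes x: "x \<in> words N"
  shows "(\<Inter>i\<in>{1..}. cylmap r d x i ` K) = {code x}"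
proof -
  let ?S = "\<lambda>n. cylmap r d x (Suc n) ` K"
  have "\<exists>p. \<Inter>(range ?S) = {p}"
  proof (rule decreasing_closed_nest_sing)
    show "closed (?S n)" for n
      by (intro compact_imp_closed compact_continuous_image continuous_on_cylmap compact_K)
    show "?S n \<noteq> {}" for n
      using K_nonempty by blast
    show "?S n \<subseteq> ?S m" if "m \<le> n" for m n
      using that by (intro cylmap_K_antimono[OF x]) simp
    fix e :: real
    assume "0 < e"
    then obtain n where n: "rmax ^ n * diameter K < e"
      using rmax_pow_diameter_small by blast
    have "dist p q < e" if "p \<in> ?S n" "q \<in> ?S n" for p q
    proof -
      have sub: "?S n \<subseteq> cylmap r d x n ` K"
        by (rule cylmap_K_antimono[OF x]) simp
      have "p \<in> cylmap r d x n ` K" "q \<in> cylmap r d x n ` K"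
        using subsetD[OF sub] that by simp_all
      then obtain p' q' where "p = cylmap r d x n p'" "p' \<in> K" "q = cylmap r d x n q'" "q' \<in> K"
        by (elim imageE)
      then show ?thesis
        using dist_cylmap_le[OF x, of p' q' n] n by (simp add: dist_norm)
    qed
    then show "\<exists>n. \<forall>p\<in>?S n. \<forall>q\<in>?S n. dist p q < e"
      by blast
  qed
  then obtain p where p: "\<Inter>(range ?S) = {p}"
    by blast
  have "{1..} = range Suc"
    by (auto simp: image_iff not0_implies_Suc)
  then have "(\<Inter>i\<in>{1..}. cylmap r d x i ` K) = \<Inter>(range ?S)"
    by (simp add: image_comp)
  then show ?thesis
    unfolding coding_def p by simp
qed

lemma coding_in_cylinder:
  assumes "x \<in> words N"
  shows "code x \<in> cylmap r d x n ` K"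
proof -
  have "code x \<in> (\<Inter>i\<in>{1..}. cylmap r d x i ` K)"
    unfolding coding_singleton[OF assms] by simp
  then have "code x \<in> cylmap r d x (Suc n) ` K"
    by (rule INT_D) simp
  also have "\<dots> \<subseteq> cylmap r d x n ` K"
    by (rule cylmap_K_antimono[OF assms]) simp
  finally show ?thesis .
qed

lemma K_address:
  assumes p: "p \<in> K"
  obtains x qs where "x \<in> words N" "\<And>n. qs n \<in> K" "\<And>n. p = cylmap r d x n (qs n)"
proof -
  have "\<forall>q\<in>K. \<exists>jz. fst jz \<in> {1..N} \<and> snd jz \<in> K \<and> q = \<phi> (fst jz) (snd jz)"
    using K_self_similar by fastforce
  then obtain pre where pre: "\<And>q. q \<in> K \<Longrightarrow>
      fst (pre q) \<in> {1..N} \<and> snd (pre q) \<in> K \<and> q = \<phi> (fst (pre q)) (snd (pre q))"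
    by metis
  define qs where "qs n = ((snd \<circ> pre) ^^ n) p" for n
  define x where "x n = fst (pre (qs n))" for n
  have qs_K: "qs n \<in> K" for n
    by (induction n) (use p pre in \<open>auto simp: qs_def\<close>)
  have "x \<in> words N"
    using pre qs_K by (auto simp: words_def x_def)
  moreover have "p = cylmap r d x n (qs n)" for n
  proof (induction n)
    case (Suc n)
    have "\<phi> (x n) (qs (Suc n)) = qs n"
      using pre[OF qs_K[of n]] by (simp add: x_def qs_def)
    with Suc.IH show ?case
      by simp
  qed (simp add: qs_def)
  ultimately show ?thesis
    using qs_K that by blast
qed

lemma coding_image: "code ` words N = K"
proof
  show "code ` words N \<subseteq> K"
    using coding_in_cylinder[of _ 0] by auto
  show "K \<subseteq> code ` words N"
  proof
    fix p
    assume "p \<in> K"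
    then obtain x qs where x: "x \<in> words N" and "\<And>n. qs n \<in> K" "\<And>n. p = cylmap r d x n (qs n)"
      using K_address by blast
    then have "p \<in> (\<Inter>i\<in>{1..}. cylmap r d x i ` K)"
      by blast
    then show "p \<in> code ` words N"
      using coding_singleton[OF x] x by auto
  qed
qed

text \<open>Each point of K is the limit of the images of the vertex omega 0 under the
  cylinder maps of its address, and these images stay in the closed triangle.\<close>

lemma K_subset_triangle: "K \<subseteq> triangle"
proof
  fix p
  assume p: "p \<in> K"
  then obtain x qs where x: "x \<in> words N" and qs: "\<And>n. qs n \<in> K"
    and p_eq: "\<And>n. p = cylmap r d x n (qs n)"
    using K_address by blast
  let ?D = "diameter (insert (omega 0) K)"
  have bdd: "bounded (insert (omega 0) K)"
    using bounded_K by simp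
  have close: "dist p (cylmap r d x n (omega 0)) \<le> rmax ^ n * ?D" for n
  proof -
    have "dist p (cylmap r d x n (omega 0)) = cyl_ratio r x n * dist (qs n) (omega 0)"
      using cyl_ratio_bounds(3)[OF x, of n] p_eq[of n]
      by (simp add: dist_norm cylmap_diff norm_mult)
    also have "\<dots> \<le> rmax ^ n * ?D"
      using cyl_ratio_bounds[OF x, of n] diameter_bounded_bound[OF bdd, of "qs n" "omega 0"] qs[of n]
      by (intro mult_mono) auto
    finally show ?thesis .
  qed
  show "p \<in> triangle"
  proof (rule ccontr)
    assume "p \<notin> triangle"
    then obtain e where e: "0 < e" "\<And>y. y \<in> triangle \<Longrightarrow> e \<le> dist p y"
      using separate_point_closed[OF compact_imp_closed[OF compact_triangle]] by metis
    obtain n where n: "rmax ^ n * ?D < e"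
      using exists_pow_mult_less[OF _ rmax_less_1 diameter_ge_0[OF bdd] e(1)]
        rmin_pos rmin_le_rmax by force
    have "cylmap r d x n (omega 0) \<in> triangle"
      using cylmap_triangle_subset[OF x, of n] omega_in_triangle[of 0] by auto
    then show False
      using e(2) close[of n] n by fastforce
  qed
qed

lemma vertex_preimage:
  assumes z: "z \<in> triangle" and j: "j \<in> {1..N}" and v: "v < 3" and eq: "\<phi> j z = omega v"
  shows "z = omega v" "\<phi> j (omega v) = omega v"
proof -
  let ?P = "\<phi> j (omega v)"
  have P: "?P \<in> triangle"
    using phi_triangle_subset[OF j] omega_in_triangle[OF v] by auto
  have "barycentric v (omega v) - barycentric v ?P = barycentric_lin v (\<phi> j z - ?P)"
    using eq by (simp add: barycentric_lin_diff)
  also have "\<dots> = r j * (barycentric v z - barycentric v (omega v))"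
    by (simp add: phi_diff barycentric_lin_scale barycentric_lin_diff)
  finally have eq': "1 - barycentric v ?P = r j * (barycentric v z - 1)"
    using barycentric_omega[OF v v] by simp
  have "barycentric v ?P \<le> 1" "barycentric v z \<le> 1"
    using barycentric_le_1 P z v by auto
  moreover have "0 < r j"
    using r_pos[OF j] .
  ultimately have "r j * (barycentric v z - 1) \<le> 0"
    by (intro mult_nonneg_nonpos) auto
  then have "barycentric v ?P = 1" "r j * (barycentric v z - 1) = 0"
    using eq' \<open>barycentric v ?P \<le> 1\<close> by linarith+
  then have "barycentric v z = 1" "barycentric v ?P = 1"
    using \<open>0 < r j\<close> by simp_all
  then show "z = omega v" "?P = omega v"
    using barycentric_eq_1_imp_vertex z P v by blast+
qed

lemma phi_vertex_segment:
  assumes k: "k \<in> {1..N}" and u: "u < 3" and v: "v < 3" and m: "0 \<le> m" "m \<le> r k"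
  shows "\<phi> k (omega v) + of_real m * (omega u - omega v) \<in> \<phi> k ` triangle"
proof -
  define t where "t = m / r k"
  have t: "0 \<le> t" "t \<le> 1" "r k * t = m"
    using m r_pos[OF k] by (auto simp: t_def)
  have "(1 - t) *\<^sub>R omega v + t *\<^sub>R omega u \<in> triangle"
    using t omega_in_triangle[OF v] omega_in_triangle[OF u] convex_triangle
    by (intro convexD) auto
  moreover have "\<phi> k ((1 - t) *\<^sub>R omega v + t *\<^sub>R omega u)
      = \<phi> k (omega v) + of_real m * (omega u - omega v)"
    using phi_diff[of r d k "(1 - t) *\<^sub>R omega v + t *\<^sub>R omega u" "omega v"] t(3)
    by (simp add: scaleR_conv_of_real algebra_simps flip: of_real_mult)
  ultimately show ?thesis
    by (metis image_eqI)
qed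

text \<open>Near a common image of omega v, both cells contain a short segment towards another
  vertex; the segment would lie in their intersection, which consists of vertex images only.\<close>

lemma phi_vertex_inj:
  assumes i: "i \<in> {1..N}" and j: "j \<in> {1..N}" and v: "v < 3"
    and eq: "\<phi> i (omega v) = \<phi> j (omega v)"
  shows "i = j"
proof (rule ccontr)
  assume ij: "i \<noteq> j"
  define u :: nat where "u = (if v = 0 then 1 else 0)"
  have u: "u < 3" "u \<noteq> v"
    by (auto simp: u_def)
  define m where "m = min (r i) (r j) / 2"
  have m: "0 < m" "m \<le> r i / 2" "m \<le> r j / 2"
    using r_pos[OF i] r_pos[OF j] by (auto simp: m_def)
  let ?p = "\<phi> i (omega v) + of_real m * (omega u - omega v)"
  have "?p \<in> \<phi> i ` triangle \<inter> \<phi> j ` triangle"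
    using phi_vertex_segment[OF i u(1) v, of m] phi_vertex_segment[OF j u(1) v, of m] m
      r_pos[OF i] r_pos[OF j] eq by auto
  then have "?p \<in> \<phi> i ` {omega 0, omega 1, omega 2}"
    using phi_triangle_inter[OF i j ij] by blast
  then obtain w :: nat where "w \<in> {0, 1, 2}" "?p = \<phi> i (omega w)"
    by blast
  then have w: "w < 3" "?p = \<phi> i (omega w)"
    by auto
  then have "of_real (r i) * (omega w - omega v) = of_real m * (omega u - omega v)"
    by (metis add_diff_cancel_left' phi_diff)
  then have "r i * (barycentric u (omega w) - barycentric u (omega v))
      = m * (barycentric u (omega u) - barycentric u (omega v))"
    by (metis barycentric_lin_diff barycentric_lin_scale)
  then have "r i * barycentric u (omega w) = m"
    using barycentric_omega[OF v u(1)] barycentric_omega[OF u(1) u(1)] u by simp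
  then show False
    using barycentric_omega[OF w(1) u(1)] m r_pos[OF i] by (auto split: if_splits)
qed

lemma ex1_fixing_map:
  assumes "omega v \<in> K" "v < 3"
  shows "\<exists>!j. j \<in> {1..N} \<and> \<phi> j (omega v) = omega v"
proof -
  obtain j z where "j \<in> {1..N}" "z \<in> K" "omega v = \<phi> j z"
    using assms(1) K_self_similar by blast
  then have "j \<in> {1..N} \<and> \<phi> j (omega v) = omega v"
    using vertex_preimage[of z j v] K_subset_triangle assms by auto
  then show ?thesis
    using phi_vertex_inj assms by metis
qed

lemma letter_eq_iff:
  assumes "omega v \<in> K" "v < 3" "j \<in> {1..N}"
  shows "letter N r d K v = int j \<longleftrightarrow> \<phi> j (omega v) = omega v"
proof -
  let ?J = "THE j. j \<in> {1..N} \<and> \<phi> j (omega v) = omega v"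
  have "?J \<in> {1..N} \<and> \<phi> ?J (omega v) = omega v"
    using theI'[OF ex1_fixing_map[OF assms(1,2)]] .
  moreover have "letter N r d K v = int ?J"
    using assms by (simp add: letter_def)
  ultimately show ?thesis
    using ex1_fixing_map[OF assms(1,2)] assms(3) by auto
qed

lemma letter_in_range_iff:
  assumes "v < 3"
  shows "letter N r d K v \<in> int ` {1..N} \<longleftrightarrow> omega v \<in> K"
proof
  show "letter N r d K v \<in> int ` {1..N} \<Longrightarrow> omega v \<in> K"
    by (rule ccontr) (auto simp: letter_def)
  assume "omega v \<in> K"
  then obtain j where "j \<in> {1..N}" "\<phi> j (omega v) = omega v"
    using ex1_fixing_map assms by blast
  then show "letter N r d K v \<in> int ` {1..N}"
    using letter_eq_iff \<open>omega v \<in> K\<close> assms by blast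
qed

lemma vertex_notin_cell:
  assumes "omega v \<in> K" "v < 3" "w \<in> {1..N}" "letter N r d K v \<noteq> int w"
  shows "omega v \<notin> \<phi> w ` K"
proof
  assume "omega v \<in> \<phi> w ` K"
  then obtain z where "z \<in> K" "omega v = \<phi> w z"
    by blast
  then have "\<phi> w (omega v) = omega v"
    using vertex_preimage[of z w v] K_subset_triangle assms by auto
  then show False
    using letter_eq_iff[OF assms(1-3)] assms(4) by simp
qed

text \<open>The side condition under which delta moves from Id to S a b.\<close>

definition shared_vertex :: "nat \<Rightarrow> nat \<Rightarrow> nat \<Rightarrow> nat \<Rightarrow> bool" where
  "shared_vertex i j a b \<longleftrightarrow> a \<in> {0,1,2} \<and> b \<in> {0,1,2} \<and> a \<noteq> b \<and>
      letter N r d K a \<in> int ` {1..N} \<and> letter N r d K b \<in> int ` {1..N} \<and>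
      \<phi> i (omega b) = \<phi> j (omega a)"

lemma shared_vertex_imp:
  assumes "shared_vertex i j a b"
  shows "a < 3 \<and> b < 3 \<and> a \<noteq> b \<and> omega a \<in> K \<and> omega b \<in> K \<and>
    \<phi> i (omega b) = \<phi> j (omega a)"
proof -
  have ab: "a < 3" "b < 3"
    using assms by (auto simp: shared_vertex_def)
  then show ?thesis
    using assms letter_in_range_iff[OF ab(1)] letter_in_range_iff[OF ab(2)]
    by (simp add: shared_vertex_def)
qed

lemma meeting_cells_share_vertex:
  assumes i: "i \<in> {1..N}" and j: "j \<in> {1..N}" and ij: "i \<noteq> j"
    and p: "p \<in> \<phi> i ` K" "p \<in> \<phi> j ` K"
  shows "\<exists>a b. shared_vertex i j a b"
proof -
  obtain z1 z2 where z: "z1 \<in> K" "z2 \<in> K" "p = \<phi> i z1" "p = \<phi> j z2"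
    using p by blast
  have "z1 \<in> triangle" "z2 \<in> triangle"
    using z K_subset_triangle by auto
  then have "p \<in> \<phi> i ` triangle" "p \<in> \<phi> j ` triangle"
    using z(3,4) by (simp_all add: rev_image_eqI)
  then have "p \<in> \<phi> i ` {omega 0, omega 1, omega 2}" "p \<in> \<phi> j ` {omega 0, omega 1, omega 2}"
    using phi_triangle_inter[OF i j ij] by blast+
  then have "\<exists>b\<in>{0,1,2::nat}. p = \<phi> i (omega b)" "\<exists>a\<in>{0,1,2::nat}. p = \<phi> j (omega a)"
    by auto
  then obtain a b :: nat where "a \<in> {0,1,2}" "b \<in> {0,1,2}"
    and ab: "p = \<phi> i (omega b)" "p = \<phi> j (omega a)"
    by blast
  then have "a < 3" "b < 3"
    by auto
  have "z1 = omega b" "z2 = omega a"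
    using phi_inj[OF i, of z1] phi_inj[OF j, of z2] z ab by metis+
  then have "omega a \<in> K" "omega b \<in> K"
    using z by simp_all
  moreover have "a \<noteq> b"
    using ab phi_vertex_inj[OF i j, of a] ij \<open>a < 3\<close> by auto
  ultimately have "shared_vertex i j a b"
    unfolding shared_vertex_def
    using \<open>a \<in> {0,1,2}\<close> \<open>b \<in> {0,1,2}\<close> \<open>a < 3\<close> \<open>b < 3\<close> ab
      letter_in_range_iff[of a] letter_in_range_iff[of b]
    by auto
  then show ?thesis
    by blast
qed

subsection \<open>The topology automaton\<close>

abbreviation "itinerary \<equiv> itin N r d K"

lemma delta_Id:
  "delta N r d K Id (i, j) =
    (if i = j then Id
     else if \<exists>a b. shared_vertex i j a b
     then (case SOME (a, b). shared_vertex i j a b of (a, b) \<Rightarrow> S a b)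
     else Exit)"
proof -
  have sv: "shared_vertex i j = (\<lambda>a b. a \<in> {0,1,2} \<and> b \<in> {0,1,2} \<and> a \<noteq> b \<and>
      letter N r d K a \<in> int ` {1..N} \<and> letter N r d K b \<in> int ` {1..N} \<and>
      \<phi> i (omega b) = \<phi> j (omega a))"
    by (intro ext) (simp add: shared_vertex_def)
  show ?thesis
    unfolding sv by (simp add: delta_def)
qed

lemma delta_Id_eq_S:
  assumes "delta N r d K Id (i, j) = S a b"
  shows "shared_vertex i j a b"
proof -
  have ex: "\<exists>ab. (\<lambda>(a, b). shared_vertex i j a b) ab"
    and some: "(SOME (a, b). shared_vertex i j a b) = (a, b)"
    using assms by (auto simp: delta_Id split: if_splits prod.splits)
  from someI_ex[OF ex] show ?thesis
    unfolding some by simp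
qed

lemma delta_Id_eq_Exit:
  "delta N r d K Id (i, j) = Exit \<Longrightarrow> i \<noteq> j \<and> \<not> (\<exists>a b. shared_vertex i j a b)"
  unfolding delta_Id by (auto split: if_splits prod.splits)

lemma delta_Exit: "delta N r d K Exit ij = Exit"
  unfolding delta_def by (simp split: prod.splits)

lemma delta_S:
  "delta N r d K (S a b) (i, j) =
    (if int i = letter N r d K b \<and> int j = letter N r d K a then S a b else Exit)"
  by (simp add: delta_def)

lemma delta_S_eq_S:
  "delta N r d K (S a b) (i, j) = S a' b' \<Longrightarrow>
    a' = a \<and> b' = b \<and> int i = letter N r d K b \<and> int j = letter N r d K a"
  by (simp add: delta_S split: if_splits)

lemma delta_S_eq_Exit:
  "delta N r d K (S a b) (i, j) = Exit \<Longrightarrow>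
    \<not> (int i = letter N r d K b \<and> int j = letter N r d K a)"
  by (simp add: delta_S split: if_splits)

lemma delta_eq_Id: "delta N r d K q (i, j) = Id \<Longrightarrow> q = Id \<and> i = j"
proof (cases q)
  case Id
  then show "delta N r d K q (i, j) = Id \<Longrightarrow> q = Id \<and> i = j"
    by (simp add: delta_Id case_prod_beta split: if_splits)
next
  case (S a b)
  then show "delta N r d K q (i, j) = Id \<Longrightarrow> q = Id \<and> i = j"
    by (simp add: delta_S split: if_splits)
next
  case Exit
  then show "delta N r d K q (i, j) = Id \<Longrightarrow> q = Id \<and> i = j"
    by (simp add: delta_Exit)
qed

lemma itinerary_Suc_eq_Id:
  assumes "itinerary x y (Suc n) = Id"
  shows "itinerary x y n = Id \<and> x n = y n"
proof -
  have "delta N r d K (itinerary x y n) (x n, y n) = Id"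
    using assms by (cases "itinerary x y n = Exit") simp_all
  then show ?thesis
    by (rule delta_eq_Id)
qed

lemma itinerary_Id_imp_prefix_eq:
  "itinerary x y n = Id \<Longrightarrow> l < n \<Longrightarrow> x l = y l"
proof (induction n)
  case (Suc n)
  then have "itinerary x y n = Id" "x n = y n"
    using itinerary_Suc_eq_Id by blast+
  with Suc.IH Suc.prems(2) show ?case
    using less_Suc_eq by blast
qed simp

lemma itinerary_S:
  assumes x: "x \<in> words N" and y: "y \<in> words N" and S: "itinerary x y n = S a b"
  shows "a < 3 \<and> b < 3 \<and> a \<noteq> b \<and> omega a \<in> K \<and> omega b \<in> K \<and>
    cylmap r d x n (omega b) = cylmap r d y n (omega a)"
  using S
proof (induction n arbitrary: a b)
  case (Suc n)
  have xn: "x n \<in> {1..N}" and yn: "y n \<in> {1..N}"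
    using words_in_range x y by auto
  show ?case
  proof (cases "itinerary x y n")
    case Id
    then have "shared_vertex (x n) (y n) a b"
      using Suc.prems by (intro delta_Id_eq_S) simp
    then have sv: "a < 3 \<and> b < 3 \<and> a \<noteq> b \<and> omega a \<in> K \<and> omega b \<in> K"
      and glue: "\<phi> (x n) (omega b) = \<phi> (y n) (omega a)"
      by (simp_all add: shared_vertex_imp)
    have "cylmap r d x n = cylmap r d y n"
      using itinerary_Id_imp_prefix_eq[OF Id] by (rule cylmap_cong)
    then have "cylmap r d x (Suc n) (omega b) = cylmap r d y (Suc n) (omega a)"
      using glue by simp
    with sv show ?thesis
      by simp
  next
    case (S a' b')
    then have "delta N r d K (S a' b') (x n, y n) = S a b"
      using Suc.prems by simp
    then have "a' = a" "b' = b" "int (x n) = letter N r d K b" "int (y n) = letter N r d K a"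
      using delta_S_eq_S by blast+
    with S Suc.IH have inv: "a < 3 \<and> b < 3 \<and> a \<noteq> b \<and> omega a \<in> K \<and> omega b \<in> K \<and>
        cylmap r d x n (omega b) = cylmap r d y n (omega a)"
      by simp
    moreover have "\<phi> (x n) (omega b) = omega b" "\<phi> (y n) (omega a) = omega a"
      using letter_eq_iff[OF _ _ xn, of b] letter_eq_iff[OF _ _ yn, of a] inv
        \<open>int (x n) = letter N r d K b\<close> \<open>int (y n) = letter N r d K a\<close> by simp_all
    ultimately show ?thesis
      by simp
  next
    case Exit
    then show ?thesis
      using Suc.prems by simp
  qed
qed simp

subsection \<open>Distance estimates\<close>

lemma coding_in_subcell:
  assumes "x \<in> words N"
  obtains q where "q \<in> \<phi> (x n) ` K" "code x = cylmap r d x n q"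
proof -
  obtain p where "code x = cylmap r d x (Suc n) p" "p \<in> K"
    using coding_in_cylinder[OF assms, of "Suc n"] by (rule imageE)
  then show ?thesis
    using that[of "\<phi> (x n) p"] by simp
qed

lemma dist_coding_le:
  assumes x: "x \<in> words N" and y: "y \<in> words N" and alive: "itinerary x y n \<noteq> Exit"
  shows "cmod (code x - code y) \<le> 2 * rmax ^ n * diameter K"
proof -
  obtain p1 where p1: "code x = cylmap r d x n p1" "p1 \<in> K"
    using coding_in_cylinder[OF x, of n] by (rule imageE)
  obtain p2 where p2: "code y = cylmap r d y n p2" "p2 \<in> K"
    using coding_in_cylinder[OF y, of n] by (rule imageE)
  have D: "0 \<le> rmax ^ n * diameter K"
    using rmin_pos rmin_le_rmax diameter_K_nonneg by simp
  show ?thesis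
  proof (cases "itinerary x y n")
    case Id
    then have "cylmap r d x n = cylmap r d y n"
      by (intro cylmap_cong itinerary_Id_imp_prefix_eq)
    then have "cmod (code x - code y) \<le> rmax ^ n * diameter K"
      using dist_cylmap_le[OF y p1(2) p2(2), of n] p1 p2 by simp
    with D show ?thesis
      by simp
  next
    case (S a b)
    then have ab: "omega a \<in> K" "omega b \<in> K" "cylmap r d x n (omega b) = cylmap r d y n (omega a)"
      using itinerary_S[OF x y] by simp_all
    have "code x - code y = (cylmap r d x n p1 - cylmap r d x n (omega b))
        + (cylmap r d y n (omega a) - cylmap r d y n p2)"
      using p1 p2 ab(3) by simp
    then have "cmod (code x - code y) \<le> cmod (cylmap r d x n p1 - cylmap r d x n (omega b))
        + cmod (cylmap r d y n (omega a) - cylmap r d y n p2)"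
      by (metis norm_triangle_ineq)
    also have "\<dots> \<le> rmax ^ n * diameter K + rmax ^ n * diameter K"
      using dist_cylmap_le[OF x p1(2) ab(2)] dist_cylmap_le[OF y ab(1) p2(2)] by (rule add_mono)
    finally show ?thesis
      by (simp add: algebra_simps)
  next
    case Exit
    with alive show ?thesis
      by simp
  qed
qed

lemma compact_phi_K: "compact (\<phi> j ` K)"
  unfolding phi_def by (intro compact_continuous_image continuous_intros compact_K)

lemma disjoint_cells_gap:
  obtains \<delta> where "0 < \<delta>"
    "\<And>i j p q. i \<in> {1..N} \<Longrightarrow> j \<in> {1..N} \<Longrightarrow> \<phi> i ` K \<inter> \<phi> j ` K = {} \<Longrightarrow>
       p \<in> \<phi> i ` K \<Longrightarrow> q \<in> \<phi> j ` K \<Longrightarrow> \<delta> \<le> cmod (p - q)"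
proof -
  let ?I = "{(i, j) \<in> {1..N} \<times> {1..N}. \<phi> i ` K \<inter> \<phi> j ` K = {}}"
  let ?g = "\<lambda>(i, j). setdist (\<phi> i ` K) (\<phi> j ` K)"
  have "finite ?I"
    by (rule finite_subset[of _ "{1..N} \<times> {1..N}"]) auto
  moreover have "0 < ?g ij" if "ij \<in> ?I" for ij
    using that K_nonempty
    by (cases ij) (simp add: setdist_gt_0_compact_closed compact_phi_K compact_imp_closed)
  ultimately obtain \<delta> where \<delta>: "0 < \<delta>" "\<And>ij. ij \<in> ?I \<Longrightarrow> \<delta> \<le> ?g ij"
    using finite_pos_lower_bound[of ?I ?g] by blast
  show ?thesis
  proof (rule that[OF \<delta>(1)])
    fix i j p q
    assume "i \<in> {1..N}" "j \<in> {1..N}" "\<phi> i ` K \<inter> \<phi> j ` K = {}" "p \<in> \<phi> i ` K" "q \<in> \<phi> j ` K"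
    then show "\<delta> \<le> cmod (p - q)"
      using \<delta>(2)[of "(i, j)"] setdist_le_dist[of p "\<phi> i ` K" q "\<phi> j ` K"]
      by (simp add: dist_norm)
  qed
qed

lemma cells_vertex_gap:
  obtains \<eta> where "0 < \<eta>"
    "\<And>v w q. v < 3 \<Longrightarrow> w \<in> {1..N} \<Longrightarrow> omega v \<notin> \<phi> w ` K \<Longrightarrow> q \<in> \<phi> w ` K \<Longrightarrow>
       \<eta> \<le> 1 - barycentric v q"
proof -
  let ?I = "{(v, w) \<in> {..<3} \<times> {1..N}. omega v \<notin> \<phi> w ` K}"
  let ?g = "\<lambda>(v, w). infdist (omega v) (\<phi> w ` K)"
  have "finite ?I"
    by (rule finite_subset[of _ "{..<3} \<times> {1..N}"]) auto
  moreover have "0 < ?g vw" if "vw \<in> ?I" for vw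
    using that K_nonempty
    by (cases vw) (simp add: infdist_pos_not_in_closed compact_phi_K compact_imp_closed)
  ultimately obtain \<eta> where \<eta>: "0 < \<eta>" "\<And>vw. vw \<in> ?I \<Longrightarrow> \<eta> \<le> ?g vw"
    using finite_pos_lower_bound[of ?I ?g] by blast
  show ?thesis
  proof (rule that[OF \<eta>(1)])
    fix v w q
    assume vw: "v < 3" "w \<in> {1..N}" "omega v \<notin> \<phi> w ` K" and q: "q \<in> \<phi> w ` K"
    then have "q \<in> triangle"
      using phi_K_subset K_subset_triangle by blast
    then have "cmod (q - omega v) \<le> 1 - barycentric v q"
      using vw(1) by (rule norm_sub_vertex_le)
    moreover have "\<eta> \<le> dist (omega v) q"
      using \<eta>(2)[of "(v, w)"] vw infdist_le[OF q, of "omega v"] by simp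
    ultimately show "\<eta> \<le> 1 - barycentric v q"
      by (simp add: dist_norm norm_minus_commute)
  qed
qed

lemma dist_coding_ge_cells:
  assumes x: "x \<in> words N" and y: "y \<in> words N"
    and Id: "itinerary x y n = Id" and exit: "itinerary x y (Suc n) = Exit"
    and gap: "\<And>i j p q. i \<in> {1..N} \<Longrightarrow> j \<in> {1..N} \<Longrightarrow> \<phi> i ` K \<inter> \<phi> j ` K = {} \<Longrightarrow>
       p \<in> \<phi> i ` K \<Longrightarrow> q \<in> \<phi> j ` K \<Longrightarrow> \<delta> \<le> cmod (p - q)"
    and "0 \<le> \<delta>"
  shows "\<delta> * rmin ^ n \<le> cmod (code x - code y)"
proof -
  have xn: "x n \<in> {1..N}" and yn: "y n \<in> {1..N}"
    using words_in_range x y by auto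
  have "delta N r d K Id (x n, y n) = Exit"
    using Id exit by simp
  then have "x n \<noteq> y n" "\<not> (\<exists>a b. shared_vertex (x n) (y n) a b)"
    using delta_Id_eq_Exit by blast+
  then have disj: "\<phi> (x n) ` K \<inter> \<phi> (y n) ` K = {}"
    using meeting_cells_share_vertex[OF xn yn] by blast
  obtain q1 where q1: "q1 \<in> \<phi> (x n) ` K" "code x = cylmap r d x n q1"
    using coding_in_subcell[OF x] .
  obtain q2 where q2: "q2 \<in> \<phi> (y n) ` K" "code y = cylmap r d y n q2"
    using coding_in_subcell[OF y] .
  have "cylmap r d y n = cylmap r d x n"
    using Id by (intro cylmap_cong itinerary_Id_imp_prefix_eq[symmetric])
  then have "code y = cylmap r d x n q2"
    using q2(2) by simp
  then have "cmod (code x - code y) = cyl_ratio r x n * cmod (q1 - q2)"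
    using q1(2) cyl_ratio_bounds(3)[OF x, of n] by (simp add: cylmap_diff norm_mult)
  moreover have "\<delta> * rmin ^ n \<le> cmod (q1 - q2) * cyl_ratio r x n"
    using gap[OF xn yn disj q1(1) q2(1)] cyl_ratio_bounds[OF x, of n] rmin_pos \<open>0 \<le> \<delta>\<close>
    by (intro mult_mono) auto
  ultimately show ?thesis
    by (simp add: mult.commute)
qed

lemma dist_coding_ge_vertex:
  assumes x: "x \<in> words N" and y: "y \<in> words N"
    and S: "itinerary x y n = S a b" and exit: "itinerary x y (Suc n) = Exit"
    and gap: "\<And>v w q. v < 3 \<Longrightarrow> w \<in> {1..N} \<Longrightarrow> omega v \<notin> \<phi> w ` K \<Longrightarrow> q \<in> \<phi> w ` K \<Longrightarrow>
       \<eta> \<le> 1 - barycentric v q"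
    and "0 \<le> \<eta>"
  shows "\<eta> / 2 * rmin ^ n \<le> cmod (code x - code y)"
proof -
  have xn: "x n \<in> {1..N}" and yn: "y n \<in> {1..N}"
    using words_in_range x y by auto
  have inv: "a < 3" "b < 3" "a \<noteq> b" "omega a \<in> K" "omega b \<in> K"
    "cylmap r d x n (omega b) = cylmap r d y n (omega a)"
    using itinerary_S[OF x y S] by simp_all
  have "delta N r d K (S a b) (x n, y n) = Exit"
    using S exit by simp
  then have leaving: "\<not> (int (x n) = letter N r d K b \<and> int (y n) = letter N r d K a)"
    by (rule delta_S_eq_Exit)
  obtain q1 where q1: "q1 \<in> \<phi> (x n) ` K" "code x = cylmap r d x n q1"
    using coding_in_subcell[OF x] .
  obtain q2 where q2: "q2 \<in> \<phi> (y n) ` K" "code y = cylmap r d y n q2"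
    using coding_in_subcell[OF y] .
  have tri: "q1 \<in> triangle" "q2 \<in> triangle"
    using q1(1) q2(1) phi_K_subset[OF xn] phi_K_subset[OF yn] K_subset_triangle by auto
  have diff: "code x - code y = of_real (cyl_ratio r x n) * (q1 - omega b)
      - of_real (cyl_ratio r y n) * (q2 - omega a)"
    using q1(2) q2(2) inv(6) cylmap_diff[of r d x n] cylmap_diff[of r d y n]
    by (metis (no_types, lifting) diff_diff_eq2 diff_add_cancel add_diff_eq)
  have scales: "0 \<le> rmin ^ n" "rmin ^ n \<le> cyl_ratio r x n" "rmin ^ n \<le> cyl_ratio r y n"
    "0 \<le> cyl_ratio r x n" "0 \<le> cyl_ratio r y n"
    using rmin_pos cyl_ratio_bounds[OF x, of n] cyl_ratio_bounds[OF y, of n] by simp_all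
  show ?thesis
  proof (cases "int (x n) = letter N r d K b")
    case False
    then have "omega b \<notin> \<phi> (x n) ` K"
      using vertex_notin_cell[OF inv(5,2) xn] by simp
    then show ?thesis
      unfolding diff using gap[OF inv(2) xn _ q1(1)] scales \<open>0 \<le> \<eta>\<close>
      by (intro glued_triangles_separation_scaled[OF inv(1-3) tri]) auto
  next
    case True
    then have "omega a \<notin> \<phi> (y n) ` K"
      using leaving vertex_notin_cell[OF inv(4,1) yn] by simp
    then have "\<eta> / 2 * rmin ^ n \<le> cmod (of_real (cyl_ratio r y n) * (q2 - omega a)
        - of_real (cyl_ratio r x n) * (q1 - omega b))"
      using gap[OF inv(1) yn _ q2(1)] scales \<open>0 \<le> \<eta>\<close>
      by (intro glued_triangles_separation_scaled[OF inv(2,1) inv(3)[symmetric] tri(2,1)]) auto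
    then show ?thesis
      unfolding diff by (subst norm_minus_commute)
  qed
qed

lemma dist_coding_ge:
  obtains c where "0 < c"
    "\<And>x y n. x \<in> words N \<Longrightarrow> y \<in> words N \<Longrightarrow>
       itinerary x y n \<noteq> Exit \<Longrightarrow> itinerary x y (Suc n) = Exit \<Longrightarrow>
       c * rmin ^ n \<le> cmod (code x - code y)"
proof -
  obtain \<delta> where \<delta>: "0 < \<delta>"
    "\<And>i j p q. i \<in> {1..N} \<Longrightarrow> j \<in> {1..N} \<Longrightarrow> \<phi> i ` K \<inter> \<phi> j ` K = {} \<Longrightarrow>
       p \<in> \<phi> i ` K \<Longrightarrow> q \<in> \<phi> j ` K \<Longrightarrow> \<delta> \<le> cmod (p - q)"
    using disjoint_cells_gap by blast
  obtain \<eta> where \<eta>: "0 < \<eta>"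
    "\<And>v w q. v < 3 \<Longrightarrow> w \<in> {1..N} \<Longrightarrow> omega v \<notin> \<phi> w ` K \<Longrightarrow> q \<in> \<phi> w ` K \<Longrightarrow>
       \<eta> \<le> 1 - barycentric v q"
    using cells_vertex_gap by blast
  show ?thesis
  proof (rule that[of "min \<delta> (\<eta> / 2)"])
    show "0 < min \<delta> (\<eta> / 2)"
      using \<delta>(1) \<eta>(1) by simp
    fix x y n
    assume x: "x \<in> words N" and y: "y \<in> words N"
      and alive: "itinerary x y n \<noteq> Exit" and exit: "itinerary x y (Suc n) = Exit"
    have "0 \<le> rmin ^ n"
      using rmin_pos by simp
    then have mono: "min \<delta> (\<eta> / 2) * rmin ^ n \<le> c * rmin ^ n" if "c \<in> {\<delta>, \<eta> / 2}" for c
      using that by (intro mult_right_mono) auto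
    show "min \<delta> (\<eta> / 2) * rmin ^ n \<le> cmod (code x - code y)"
    proof (cases "itinerary x y n")
      case Id
      have "\<delta> * rmin ^ n \<le> cmod (code x - code y)"
        by (rule dist_coding_ge_cells[OF x y Id exit]) (use \<delta> in auto)
      with mono[of \<delta>] show ?thesis
        by simp
    next
      case (S a b)
      have "\<eta> / 2 * rmin ^ n \<le> cmod (code x - code y)"
        by (rule dist_coding_ge_vertex[OF x y S exit]) (use \<eta> in auto)
      with mono[of "\<eta> / 2"] show ?thesis
        by simp
    next
      case Exit
      with alive show ?thesis
        by simp
    qed
  qed
qed

lemma coding_eq_iff_never_exits:
  assumes x: "x \<in> words N" and y: "y \<in> words N"
  shows "code x = code y \<longleftrightarrow> (\<forall>k. itinerary x y k \<noteq> Exit)"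
proof
  assume eq: "code x = code y"
  obtain c where c: "0 < c"
    "\<And>n. itinerary x y n \<noteq> Exit \<Longrightarrow> itinerary x y (Suc n) = Exit \<Longrightarrow>
       c * rmin ^ n \<le> cmod (code x - code y)"
    using dist_coding_ge x y by metis
  show "\<forall>k. itinerary x y k \<noteq> Exit"
  proof (intro allI notI)
    fix k
    assume "itinerary x y k = Exit"
    then obtain n where "itinerary x y n \<noteq> Exit" "itinerary x y (Suc n) = Exit"
      using itin_last_alive by blast
    then have "c * rmin ^ n \<le> 0"
      using c(2) eq by simp
    moreover have "0 < c * rmin ^ n"
      using c(1) rmin_pos by simp
    ultimately show False
      by simp
  qed
next
  assume alive: "\<forall>k. itinerary x y k \<noteq> Exit"
  show "code x = code y"
  proof (rule ccontr)
    assume "code x \<noteq> code y"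
    then obtain n where n: "rmax ^ n * diameter K < cmod (code x - code y) / 2"
      using rmax_pow_diameter_small[of "cmod (code x - code y) / 2"] by auto
    moreover have "cmod (code x - code y) \<le> 2 * rmax ^ n * diameter K"
      using dist_coding_le[OF x y] alive by blast
    ultimately show False
      by simp
  qed
qed

lemma eqclass_eq:
  assumes "0 < \<xi>" "x \<in> words N"
  shows "eqclass N r d K \<xi> x = {y \<in> words N. code y = code x}"
proof -
  have "rho N r d K \<xi> x y = 0 \<longleftrightarrow> code y = code x" if "y \<in> words N" for y
    using rho_eq_0_iff[OF assms(1)] coding_eq_iff_never_exits[OF assms(2) that] by auto
  then show ?thesis
    unfolding eqclass_def by auto
qed

lemma dist_coding_rho_bounds:
  assumes s: "0 < s" "rmin powr (s * s) = rmax"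
    and x: "x \<in> words N" and y: "y \<in> words N"
    and lower: "\<And>n. itinerary x y n \<noteq> Exit \<Longrightarrow> itinerary x y (Suc n) = Exit \<Longrightarrow>
       c * rmin ^ n \<le> cmod (code x - code y)"
    and C: "2 * diameter K \<le> C" "1 / C \<le> c"
  shows "cmod (code x - code y) \<le> C * rho N r d K (rmin powr s) x y powr s \<and>
    (1 / C) * rho N r d K (rmin powr s) x y powr (1 / s) \<le> cmod (code x - code y)"
proof (cases "\<forall>k. itinerary x y k \<noteq> Exit")
  case True
  moreover have "0 < rmin powr s"
    using rmin_pos by simp
  ultimately have "rho N r d K (rmin powr s) x y = 0" "code x = code y"
    using rho_eq_0_iff coding_eq_iff_never_exits[OF x y] by blast+
  then show ?thesis
    by simp
next
  case False
  then obtain n where alive: "itinerary x y n \<noteq> Exit" and exit: "itinerary x y (Suc n) = Exit"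
    using itin_last_alive by blast
  then have "rho N r d K (rmin powr s) x y = (rmin powr s) ^ n"
    by (simp add: rho_def surv_time_exit)
  then have rho: "rho N r d K (rmin powr s) x y powr s = rmax ^ n"
    "rho N r d K (rmin powr s) x y powr (1 / s) = rmin ^ n"
    using powr_pow_exponent[OF rmin_pos s] by simp_all
  have "0 \<le> rmax ^ n" "0 \<le> rmin ^ n"
    using rmin_pos rmin_le_rmax by simp_all
  then have "2 * diameter K * rmax ^ n \<le> C * rmax ^ n" "1 / C * rmin ^ n \<le> c * rmin ^ n"
    using mult_right_mono[OF C(1)] mult_right_mono[OF C(2)] by blast+
  moreover have "cmod (code x - code y) \<le> 2 * diameter K * rmax ^ n"
    using dist_coding_le[OF x y alive] by (simp add: ac_simps)
  ultimately show ?thesis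
    unfolding rho using lower[OF alive exit] by linarith
qed

lemma coding_bi_holder:
  assumes s: "0 < s" "rmin powr (s * s) = rmax"
  obtains C where "0 < C"
    "\<And>x y. x \<in> words N \<Longrightarrow> y \<in> words N \<Longrightarrow>
       cmod (code x - code y) \<le> C * rho N r d K (rmin powr s) x y powr s \<and>
       (1 / C) * rho N r d K (rmin powr s) x y powr (1 / s) \<le> cmod (code x - code y)"
proof -
  obtain c where c: "0 < c"
    "\<And>x y n. x \<in> words N \<Longrightarrow> y \<in> words N \<Longrightarrow>
       itinerary x y n \<noteq> Exit \<Longrightarrow> itinerary x y (Suc n) = Exit \<Longrightarrow>
       c * rmin ^ n \<le> cmod (code x - code y)"
    using dist_coding_ge by blast
  define C where "C = max (2 * diameter K) (1 / c)"
  have pos: "0 < 1 / c"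
    using c(1) by simp
  have le: "1 / c \<le> C" "2 * diameter K \<le> C"
    by (simp_all add: C_def)
  then have "0 < C" "1 / C \<le> c"
    using pos le_imp_inverse_le[OF le(1) pos] by (linarith, simp add: inverse_eq_divide)
  then show ?thesis
    using that dist_coding_rho_bounds[OF s _ _ c(2) le(2)] by blast
qed

lemma rho_tilde_bounds:
  assumes "0 < s" "0 < C" "0 < \<xi>"
    and pair: "\<And>x y. x \<in> words N \<Longrightarrow> y \<in> words N \<Longrightarrow>
       cmod (code x - code y) \<le> C * rho N r d K \<xi> x y powr s \<and>
       (1 / C) * rho N r d K \<xi> x y powr (1 / s) \<le> cmod (code x - code y)"
    and x: "x \<in> words N" and y: "y \<in> words N"
  shows "(1 / C) * rho_tilde N r d K \<xi> (eqclass N r d K \<xi> x) (eqclass N r d K \<xi> y) powr (1 / s)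
      \<le> cmod (code x - code y)
    \<and> cmod (code x - code y)
      \<le> C * rho_tilde N r d K \<xi> (eqclass N r d K \<xi> x) (eqclass N r d K \<xi> y) powr s"
proof -
  let ?S = "{rho N r d K \<xi> a b |a b. a \<in> eqclass N r d K \<xi> x \<and> b \<in> eqclass N r d K \<xi> y}"
  have "x \<in> eqclass N r d K \<xi> x" "y \<in> eqclass N r d K \<xi> y"
    using eqclass_eq[OF assms(3)] x y by simp_all
  then have "?S \<noteq> {}"
    by blast
  moreover have bounds: "0 \<le> t \<and> cmod (code x - code y) \<le> C * t powr s \<and>
      (1 / C) * t powr (1 / s) \<le> cmod (code x - code y)" if tS: "t \<in> ?S" for t
  proof -
    obtain a b where "a \<in> eqclass N r d K \<xi> x" "b \<in> eqclass N r d K \<xi> y"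
      and t: "t = rho N r d K \<xi> a b"
      using tS by blast
    then have ab: "a \<in> words N" "b \<in> words N" and "code a = code x" "code b = code y"
      using eqclass_eq[OF assms(3)] x y by simp_all
    moreover have "cmod (code a - code b) \<le> C * t powr s \<and>
        (1 / C) * t powr (1 / s) \<le> cmod (code a - code b)"
      unfolding t using ab by (rule pair)
    moreover have "0 \<le> t"
      unfolding t by (rule rho_nonneg[OF assms(3)])
    ultimately show ?thesis
      by simp
  qed
  ultimately have "(1 / C) * Inf ?S powr (1 / s) \<le> cmod (code x - code y)
      \<and> cmod (code x - code y) \<le> C * Inf ?S powr s"
    by (rule powr_bounds_Inf[OF _ assms(2,1)])
  then show ?thesis
    unfolding rho_tilde_def .
qed

lemma quotient_coding_bi_holder:
  assumes s: "0 < s" "rmin powr (s * s) = rmax"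
  defines "\<xi> \<equiv> rmin powr s"
  shows "\<exists>f. (\<forall>x\<in>words N. f (eqclass N r d K \<xi> x) = code x)
           \<and> bij_betw f (quot N r d K \<xi>) K
           \<and> (\<exists>C>0. \<forall>a\<in>quot N r d K \<xi>. \<forall>b\<in>quot N r d K \<xi>.
                 (1 / C) * rho_tilde N r d K \<xi> a b powr (1 / s) \<le> cmod (f a - f b)
               \<and> cmod (f a - f b) \<le> C * rho_tilde N r d K \<xi> a b powr s)"
proof -
  have \<xi>: "0 < \<xi>"
    unfolding \<xi>_def using rmin_pos by simp
  note classes = eqclass_eq[OF \<xi>]
  let ?f = "\<lambda>A. code (SOME x. x \<in> A)"
  have f: "?f (eqclass N r d K \<xi> x) = code x" if "x \<in> words N" for x
    using classes that by (rule kernel_class_some)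
  have bij: "bij_betw ?f (quot N r d K \<xi>) K"
    using bij_betw_kernel_quotient[of "words N" "eqclass N r d K \<xi>" code] classes coding_image
    unfolding quot_def by simp
  obtain C where C: "0 < C"
    "\<And>x y. x \<in> words N \<Longrightarrow> y \<in> words N \<Longrightarrow>
       cmod (code x - code y) \<le> C * rho N r d K \<xi> x y powr s \<and>
       (1 / C) * rho N r d K \<xi> x y powr (1 / s) \<le> cmod (code x - code y)"
    using coding_bi_holder[OF s] unfolding \<xi>_def by blast
  have holder: "(1 / C) * rho_tilde N r d K \<xi> a b powr (1 / s) \<le> cmod (?f a - ?f b)
      \<and> cmod (?f a - ?f b) \<le> C * rho_tilde N r d K \<xi> a b powr s"
    if ab: "a \<in> quot N r d K \<xi>" "b \<in> quot N r d K \<xi>" for a b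
  proof -
    obtain x y where "x \<in> words N" "y \<in> words N"
      and "a = eqclass N r d K \<xi> x" "b = eqclass N r d K \<xi> y"
      using ab unfolding quot_def by blast
    then show ?thesis
      using rho_tilde_bounds[OF s(1) C(1) \<xi> C(2)] f by simp
  qed
  show ?thesis
  proof (intro exI[of _ ?f] conjI)
    show "\<forall>x\<in>words N. ?f (eqclass N r d K \<xi> x) = code x"
      using f by blast
    show "bij_betw ?f (quot N r d K \<xi>) K"
      by (rule bij)
    show "\<exists>C>0. \<forall>a\<in>quot N r d K \<xi>. \<forall>b\<in>quot N r d K \<xi>.
        (1 / C) * rho_tilde N r d K \<xi> a b powr (1 / s) \<le> cmod (?f a - ?f b)
      \<and> cmod (?f a - ?f b) \<le> C * rho_tilde N r d K \<xi> a b powr s"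
      using C(1) holder by blast
  qed
qed

end

theorem theorem1p3:
  fixes N :: nat and r :: "nat \<Rightarrow> real" and d :: "nat \<Rightarrow> complex" and K :: "complex set"
  assumes gasket: "fractal_gasket N r d K"
  defines "rmin \<equiv> Min (r ` {1..N})"
      and "rmax \<equiv> Max (r ` {1..N})"
  defines "s \<equiv> sqrt (ln rmax / ln rmin)"
  defines "\<xi> \<equiv> rmin powr s"
  shows "\<exists>f. (\<forall>x\<in>words N. f (eqclass N r d K \<xi> x) = coding r d K x)
           \<and> bij_betw f (quot N r d K \<xi>) K
           \<and> (\<exists>C>0. \<forall>a\<in>quot N r d K \<xi>. \<forall>b\<in>quot N r d K \<xi>.
                 (1 / C) * rho_tilde N r d K \<xi> a b powr (1 / s) \<le> cmod (f a - f b)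
               \<and> cmod (f a - f b) \<le> C * rho_tilde N r d K \<xi> a b powr s)"
proof -
  interpret gasket_ifs N r d K
    by unfold_locales (rule gasket)
  have "0 < s" "rmin powr (s * s) = rmax"
    unfolding s_def rmin_def rmax_def
    using exponent_of_ratio[OF rmin_pos rmin_le_rmax rmax_less_1] by simp_all
  then show ?thesis
    unfolding \<xi>_def rmin_def rmax_def by (rule quotient_coding_bi_holder)
qed

end
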